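(* Let $M$ be a combinatorial $3$-pseudomanifold with vertex set $V=V_1\dot\cup V_2$, and suppose the slicing $S=S_{(V_1,V_2)}$ is a weakly neighborly polyhedral map. For $i=1,2$ let $n_i$ be the number of vertices of $V_i$ that lie in the boundary of $\operatorname{span}(V_i)$ (i.e. that are joined by an edge of $M$ to a vertex of the other part). Then \[ n_1n_2\,(15-n_1n_2-n_1-n_2)=12\,\chi(S). \]
   Context: A combinatorial $3$-pseudomanifold is a finite pure $3$-dimensional simplicial complex in which the link of every vertex is a combinatorial surface. $\operatorname{span}(W)$ denotes the induced subcomplex on a vertex set $W$. A function $f:M\to\mathbb{R}$ is regular simplexwise linear (rsl) if it is linear on every simplex and takes pairwise distinct values on the vertices. Given a partition $V=V_1\dot\cup V_2$ of the vertex set into nonempty sets, choose an rsl-function $f$ with $f(v)<f(w)$ for all $v\in V_1$, $w\in V_2$ and $x_0$ strictly between $\max f(V_1)$ and $\min f(V_2)$; the slicing $S_{(V_1,V_2)}$ is the polyhedral surface $f^{-1}(x_0)$, whose facets are the triangles and quadrilaterals obtained by intersecting $f^{-1}(x_0)$ with the tetrahedra of $M$ meeting both parts; its vertices are the points where $f^{-1}(x_0)$ meets edges $\langle u,w\rangle$ of $M$ with $u\in V_1$, $w\in V_2$. A polyhedral map is weakly neighborly if any two of its vertices lie in a common face. $\chi$ denotes the Euler characteristic. *)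

theory Defs
  imports Main
begin

definition graph_connected :: "'v set \<Rightarrow> 'v set set \<Rightarrow> bool" where
  "graph_connected W E \<longleftrightarrow>
     (\<forall>x\<in>W. \<forall>y\<in>W. (x, y) \<in> {(a, b). {a, b} \<in> E}\<^sup>*)"

definition cycle_graph :: "'v set \<Rightarrow> 'v set set \<Rightarrow> bool" where
  "cycle_graph W E \<longleftrightarrow> finite W \<and> card W \<ge> 3 \<and>
     (\<forall>e\<in>E. e \<subseteq> W \<and> card e = 2) \<and>
     (\<forall>x\<in>W. card {e\<in>E. x \<in> e} = 2) \<and>
     graph_connected W E"

definition vlink :: "'a set set \<Rightarrow> 'a \<Rightarrow> 'a set set" where
  "vlink K v = {s - {v} | s. s \<in> K \<and> v \<in> s}"

definition combinatorial_surface :: "'a set set \<Rightarrow> bool" where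
  "combinatorial_surface L \<longleftrightarrow> finite L \<and> L \<noteq> {} \<and>
     (\<forall>t\<in>L. card t = 3) \<and>
     graph_connected (\<Union>L) {e. card e = 2 \<and> (\<exists>t\<in>L. e \<subseteq> t)} \<and>
     (\<forall>w\<in>\<Union>L. cycle_graph (\<Union>(vlink L w)) (vlink L w))"

text \<open>Combinatorial 3-pseudomanifold, given by its set of tetrahedra (facets);
  its vertex set is the union of the facets.\<close>
definition comb_3_pseudomanifold :: "'a set set \<Rightarrow> bool" where
  "comb_3_pseudomanifold T \<longleftrightarrow> finite T \<and> T \<noteq> {} \<and>
     (\<forall>s\<in>T. card s = 4) \<and>
     (\<forall>v\<in>\<Union>T. combinatorial_surface (vlink T v))"

text \<open>Edges of a simplex s meeting both parts; these are the vertices of the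
  slicing lying on s.\<close>
definition crossing :: "'a set \<Rightarrow> 'a set \<Rightarrow> 'a set \<Rightarrow> 'a set set" where
  "crossing V1 V2 s = {e. e \<subseteq> s \<and> card e = 2 \<and> e \<inter> V1 \<noteq> {} \<and> e \<inter> V2 \<noteq> {}}"

definition slice_vertices :: "'a set set \<Rightarrow> 'a set \<Rightarrow> 'a set \<Rightarrow> 'a set set" where
  "slice_vertices T V1 V2 = (\<Union>s\<in>T. crossing V1 V2 s)"

text \<open>Edges of the slicing: one for each triangle of M meeting both parts
  (represented by its set of two slicing vertices).\<close>
definition slice_edges :: "'a set set \<Rightarrow> 'a set \<Rightarrow> 'a set \<Rightarrow> 'a set set set" where
  "slice_edges T V1 V2 = {crossing V1 V2 t | t. card t = 3 \<and> (\<exists>s\<in>T. t \<subseteq> s) \<and>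
                                     t \<inter> V1 \<noteq> {} \<and> t \<inter> V2 \<noteq> {}}"

text \<open>Facets of the slicing (triangles / quadrilaterals): one for each
  tetrahedron of M meeting both parts (represented by its vertex set).\<close>
definition slice_faces :: "'a set set \<Rightarrow> 'a set \<Rightarrow> 'a set \<Rightarrow> 'a set set set" where
  "slice_faces T V1 V2 = {crossing V1 V2 s | s. s \<in> T \<and> s \<inter> V1 \<noteq> {} \<and> s \<inter> V2 \<noteq> {}}"

text \<open>A polygonal complex with vertices SV, edges SE (2-sets of vertices) and faces
  SF (vertex sets of the faces) is a polyhedral map if it is a connected closed
  surface (every face is a polygon, every edge lies in exactly two faces, the
  star of every vertex is a disk) and any two distinct faces meet in the empty
  set, a single vertex, or a common edge.\<close>
definition polyhedral_map :: "'v set \<Rightarrow> 'v set set \<Rightarrow> 'v set set \<Rightarrow> bool" where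
  "polyhedral_map SV SE SF \<longleftrightarrow> finite SV \<and> SV \<noteq> {} \<and>
     (\<forall>e\<in>SE. e \<subseteq> SV \<and> card e = 2) \<and>
     (\<forall>F\<in>SF. F \<subseteq> SV \<and> cycle_graph F {e\<in>SE. e \<subseteq> F}) \<and>
     (\<forall>e\<in>SE. card {F\<in>SF. e \<subseteq> F} = 2) \<and>
     (\<forall>v\<in>SV. cycle_graph {e\<in>SE. v \<in> e} {{e\<in>SE. v \<in> e \<and> e \<subseteq> F} | F. F \<in> SF \<and> v \<in> F}) \<and>
     graph_connected SV SE \<and>
     (\<forall>F\<in>SF. \<forall>G\<in>SF. F \<noteq> G \<longrightarrow> card (F \<inter> G) \<le> 1 \<or> F \<inter> G \<in> SE)"

definition weakly_neighborly :: "'v set \<Rightarrow> 'v set set \<Rightarrow> bool" where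
  "weakly_neighborly SV SF \<longleftrightarrow> (\<forall>a\<in>SV. \<forall>b\<in>SV. \<exists>F\<in>SF. a \<in> F \<and> b \<in> F)"

definition euler_char :: "'v set \<Rightarrow> 'v set set \<Rightarrow> 'v set set \<Rightarrow> int" where
  "euler_char SV SE SF = int (card SV) - int (card SE) + int (card SF)"

definition boundary_vertices :: "'a set set \<Rightarrow> 'a set \<Rightarrow> 'a set \<Rightarrow> 'a set" where
  "boundary_vertices T Vi Vj = {v\<in>Vi. \<exists>w\<in>Vj. \<exists>s\<in>T. {v, w} \<subseteq> s}"

end

theory Submission
  imports Defs
begin

text \<open>Let \<open>B1\<close>, \<open>B2\<close> be the boundary vertices and \<open>n = n1 n2\<close>. Weak neighborliness forces
  every \<open>{v, w}\<close> with \<open>v \<in> B1\<close>, \<open>w \<in> B2\<close> to be a slicing vertex, so the slicing has \<open>n\<close>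
  vertices. Count ordered pairs of disjoint slicing vertices: there are \<open>n (n1 - 1) (n2 - 1)\<close>
  of them; two disjoint ones never span an edge, so each pair lies in exactly one face. A face
  cut from a tetrahedron split as \<open>p + q = 4\<close> is a \<open>pq\<close>-gon containing
  \<open>pq (p - 1) (q - 1) = 4 (pq choose 2) - 8 pq + 12\<close> such pairs. Summing over the faces with
  \<open>\<Sum> k_F = 2 E\<close> and \<open>\<Sum> (k_F choose 2) = (n choose 2) + E\<close> gives the identity.\<close>

lemma int_choose_two: "2 * int (n choose 2) = int n * (int n - 1)"
proof -
  have "even (n * (n - 1))" by auto
  then have "2 * (n choose 2) = n * (n - 1)" by (simp add: choose_two)
  then have "int (2 * (n choose 2)) = int (n * (n - 1))" by (rule arg_cong)
  then show ?thesis by (cases n) (simp_all add: algebra_simps)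
qed

lemma cycle_graph_card_edges:
  assumes "cycle_graph W E"
  shows "card E = card W"
proof -
  from assms have fin: "finite W" and edges: "\<forall>e\<in>E. e \<subseteq> W \<and> card e = 2"
    and degree: "\<forall>x\<in>W. card {e\<in>E. x \<in> e} = 2"
    unfolding cycle_graph_def by auto
  have "finite E"
    using edges fin by (meson Pow_iff finite_Pow_iff rev_finite_subset subsetI)
  have "(\<Sum>x\<in>W. card {e\<in>E. x \<in> e}) = 2 * card E"
  proof (rule sum_multicount[OF fin \<open>finite E\<close>], intro ballI)
    fix e assume "e \<in> E"
    then have "{x\<in>W. x \<in> e} = e" using edges by auto
    then show "card {x\<in>W. x \<in> e} = 2" using edges \<open>e \<in> E\<close> by simp
  qed
  moreover have "(\<Sum>x\<in>W. card {e\<in>E. x \<in> e}) = 2 * card W"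
    using degree by simp
  ultimately show ?thesis by simp
qed

lemma polyhedral_map_finite:
  assumes "polyhedral_map SV SE SF"
  shows "finite SV" "finite SE" "finite SF"
proof -
  from assms have "finite SV" "SE \<subseteq> Pow SV" "SF \<subseteq> Pow SV"
    unfolding polyhedral_map_def by auto
  then show "finite SV" "finite SE" "finite SF"
    by (auto intro: finite_subset)
qed

lemma polyhedral_map_sum_card_faces:
  assumes "polyhedral_map SV SE SF"
  shows "(\<Sum>F\<in>SF. card F) = 2 * card SE"
proof -
  from assms have faces: "\<forall>F\<in>SF. cycle_graph F {e\<in>SE. e \<subseteq> F}"
    and edges: "\<forall>e\<in>SE. card {F\<in>SF. e \<subseteq> F} = 2"
    unfolding polyhedral_map_def by auto
  have "(\<Sum>F\<in>SF. card F) = (\<Sum>F\<in>SF. card {e\<in>SE. e \<subseteq> F})"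
    using faces by (intro sum.cong) (auto simp: cycle_graph_card_edges)
  also have "\<dots> = 2 * card SE"
    using polyhedral_map_finite[OF assms] edges by (intro sum_multicount) auto
  finally show ?thesis .
qed

lemma weakly_neighborly_unique_face:
  assumes "polyhedral_map SV SE SF" "weakly_neighborly SV SF"
    and "x \<in> SV" "y \<in> SV" "x \<noteq> y" "{x, y} \<notin> SE"
  shows "card {F\<in>SF. x \<in> F \<and> y \<in> F} = 1"
proof -
  from assms(1) have faces_sub: "\<forall>F\<in>SF. F \<subseteq> SV" and edges: "\<forall>e\<in>SE. card e = 2"
    and meet: "\<forall>F\<in>SF. \<forall>G\<in>SF. F \<noteq> G \<longrightarrow> card (F \<inter> G) \<le> 1 \<or> F \<inter> G \<in> SE"
    unfolding polyhedral_map_def by auto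
  obtain F where F: "F \<in> SF" "x \<in> F" "y \<in> F"
    using assms(2-4) unfolding weakly_neighborly_def by blast
  have "G = F" if G: "G \<in> SF" "x \<in> G" "y \<in> G" for G
  proof (rule ccontr)
    assume "G \<noteq> F"
    have fin: "finite (G \<inter> F)"
      using faces_sub F(1) polyhedral_map_finite(1)[OF assms(1)] by (meson finite_Int finite_subset)
    have xy: "{x, y} \<subseteq> G \<inter> F" using F G by auto
    then have "2 \<le> card (G \<inter> F)"
      using card_mono[OF fin xy] assms(5) by simp
    then have "G \<inter> F \<in> SE" using meet G(1) F(1) \<open>G \<noteq> F\<close> by force
    then have "G \<inter> F = {x, y}"
      using edges fin xy assms(5) by (metis card_2_iff card_subset_eq)
    then show False using \<open>G \<inter> F \<in> SE\<close> assms(6) by simp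
  qed
  then have "{F\<in>SF. x \<in> F \<and> y \<in> F} = {F}" using F by blast
  then show ?thesis by simp
qed

lemma weakly_neighborly_sum_card_pairs:
  assumes "polyhedral_map SV SE SF" "weakly_neighborly SV SF"
    and "\<And>x y. x \<in> SV \<Longrightarrow> y \<in> SV \<Longrightarrow> R x y \<Longrightarrow> x \<noteq> y \<and> {x, y} \<notin> SE"
  shows "(\<Sum>F\<in>SF. card {(x, y)\<in>F \<times> F. R x y}) = card {(x, y)\<in>SV \<times> SV. R x y}"
proof -
  define P where "P = {(x, y)\<in>SV \<times> SV. R x y}"
  have faces_sub: "\<forall>F\<in>SF. F \<subseteq> SV"
    using assms(1) unfolding polyhedral_map_def by auto
  have "(\<Sum>F\<in>SF. card {(x, y)\<in>F \<times> F. R x y}) = (\<Sum>F\<in>SF. card {p\<in>P. p \<in> F \<times> F})"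
    using faces_sub by (intro sum.cong refl arg_cong[where f = card]) (auto simp: P_def)
  also have "\<dots> = 1 * card P"
  proof (rule sum_multicount)
    show "\<forall>p\<in>P. card {F\<in>SF. p \<in> F \<times> F} = 1"
    proof
      fix p assume "p \<in> P"
      then obtain x y where "p = (x, y)" "x \<in> SV" "y \<in> SV" "R x y" by (auto simp: P_def)
      then show "card {F\<in>SF. p \<in> F \<times> F} = 1"
        using weakly_neighborly_unique_face[OF assms(1,2)] assms(3) by simp
    qed
  qed (use polyhedral_map_finite[OF assms(1)] in \<open>auto simp: P_def intro: finite_subset[of _ "SV \<times> SV"]\<close>)
  finally show ?thesis by (simp add: P_def)
qed

lemma weakly_neighborly_sum_choose_two:
  assumes "polyhedral_map SV SE SF" "weakly_neighborly SV SF"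
  shows "(\<Sum>F\<in>SF. card F choose 2) = (card SV choose 2) + card SE"
proof -
  define X where "X = {p. p \<subseteq> SV \<and> card p = 2}"
  from assms(1) have faces_sub: "\<forall>F\<in>SF. F \<subseteq> SV"
    and edges: "\<forall>e\<in>SE. e \<subseteq> SV \<and> card e = 2"
    and edge_faces: "\<forall>e\<in>SE. card {F\<in>SF. e \<subseteq> F} = 2"
    unfolding polyhedral_map_def by auto
  have fin: "finite SV" "finite SF" using polyhedral_map_finite[OF assms(1)] by auto
  have "SE \<subseteq> X" using edges by (auto simp: X_def)
  have "(\<Sum>F\<in>SF. card F choose 2) = (\<Sum>F\<in>SF. card {p\<in>X. p \<subseteq> F})"
  proof (intro sum.cong refl)
    fix F assume "F \<in> SF"
    then have "{p\<in>X. p \<subseteq> F} = {p. p \<subseteq> F \<and> card p = 2}"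
      using faces_sub by (auto simp: X_def)
    then show "card F choose 2 = card {p\<in>X. p \<subseteq> F}"
      using \<open>F \<in> SF\<close> faces_sub fin by (simp add: n_subsets rev_finite_subset)
  qed
  also have "\<dots> = (\<Sum>p\<in>X. if p \<in> SE then 2 else 1)"
  proof (rule sum_multicount_gen)
    show "\<forall>p\<in>X. card {F\<in>SF. p \<subseteq> F} = (if p \<in> SE then 2 else 1)"
    proof
      fix p assume "p \<in> X"
      show "card {F\<in>SF. p \<subseteq> F} = (if p \<in> SE then 2 else 1)"
      proof (cases "p \<in> SE")
        case False
        obtain x y where "p = {x, y}" "x \<noteq> y" "x \<in> SV" "y \<in> SV"
          using \<open>p \<in> X\<close> by (auto simp: X_def card_2_iff)
        then show ?thesis
          using weakly_neighborly_unique_face[OF assms] False by simp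
      qed (use edge_faces in simp)
    qed
  qed (use fin in \<open>auto simp: X_def\<close>)
  also have "\<dots> = card X + card SE"
  proof -
    have "finite X" using fin by (simp add: X_def)
    then have "card X = card SE + card (X - SE)"
      using \<open>SE \<subseteq> X\<close> by (metis card_Diff_subset card_mono finite_subset le_add_diff_inverse)
    then show ?thesis
      using \<open>SE \<subseteq> X\<close> \<open>finite X\<close> by (simp add: sum.If_cases Int_absorb1 Diff_eq)
  qed
  finally show ?thesis using fin by (simp add: X_def n_subsets)
qed

definition cross_pairs :: "'a set \<Rightarrow> 'a set \<Rightarrow> 'a set set" where
  "cross_pairs P Q = (\<lambda>(v, w). {v, w}) ` (P \<times> Q)"

definition disjoint_pairs :: "'a set set \<Rightarrow> ('a set \<times> 'a set) set" where
  "disjoint_pairs X = {(x, y)\<in>X \<times> X. x \<inter> y = {}}"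

lemma inj_on_cross_pairs:
  assumes "P \<inter> Q = {}"
  shows "inj_on (\<lambda>(v, w). {v, w}) (P \<times> Q)"
  using assms unfolding inj_on_def by (auto simp: doubleton_eq_iff)

lemma card_cross_pairs:
  assumes "P \<inter> Q = {}"
  shows "card (cross_pairs P Q) = card P * card Q"
  unfolding cross_pairs_def
  by (simp add: card_image[OF inj_on_cross_pairs[OF assms]] card_cartesian_product)

lemma cross_pairs_disjoint_from:
  assumes "P \<inter> Q = {}" "a \<in> P" "c \<in> Q"
  shows "{y\<in>cross_pairs P Q. {a, c} \<inter> y = {}} = cross_pairs (P - {a}) (Q - {c})"
  using assms unfolding cross_pairs_def by auto

lemma card_disjoint_pairs_cross_pairs:
  assumes "P \<inter> Q = {}" "finite P" "finite Q"
  shows "int (card (disjoint_pairs (cross_pairs P Q)))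
           = int (card P) * int (card Q) * (int (card P) - 1) * (int (card Q) - 1)"
proof -
  have "disjoint_pairs (cross_pairs P Q)
      = (SIGMA x:cross_pairs P Q. {y\<in>cross_pairs P Q. x \<inter> y = {}})"
    unfolding disjoint_pairs_def by auto
  moreover have "finite (cross_pairs P Q)" using assms by (simp add: cross_pairs_def)
  ultimately have "int (card (disjoint_pairs (cross_pairs P Q)))
      = (\<Sum>x\<in>cross_pairs P Q. int (card {y\<in>cross_pairs P Q. x \<inter> y = {}}))"
    by simp
  also have "\<dots> = (\<Sum>(a, c)\<in>P \<times> Q. int (card {y\<in>cross_pairs P Q. {a, c} \<inter> y = {}}))"
    unfolding cross_pairs_def
    by (subst sum.reindex[OF inj_on_cross_pairs[OF assms(1)]]) (simp add: case_prod_beta)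
  also have "\<dots> = (\<Sum>(a, c)\<in>P \<times> Q. (int (card P) - 1) * (int (card Q) - 1))"
  proof (intro sum.cong refl, clarify)
    fix a c assume "a \<in> P" "c \<in> Q"
    then have "card {y\<in>cross_pairs P Q. {a, c} \<inter> y = {}} = card (P - {a}) * card (Q - {c})"
      using assms(1) card_cross_pairs[of "P - {a}" "Q - {c}"]
      by (subst cross_pairs_disjoint_from) auto
    moreover have "0 < card P" "0 < card Q"
      using \<open>a \<in> P\<close> \<open>c \<in> Q\<close> assms(2,3) by (auto simp: card_gt_0_iff)
    ultimately show "int (card {y\<in>cross_pairs P Q. {a, c} \<inter> y = {}}) = (int (card P) - 1) * (int (card Q) - 1)"
      using \<open>a \<in> P\<close> \<open>c \<in> Q\<close> assms(2,3) by (simp add: of_nat_diff)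
  qed
  finally show ?thesis by (simp add: card_cartesian_product)
qed

lemma crossing_eq_cross_pairs:
  assumes "V1 \<inter> V2 = {}"
  shows "crossing V1 V2 s = cross_pairs (s \<inter> V1) (s \<inter> V2)"
proof
  show "crossing V1 V2 s \<subseteq> cross_pairs (s \<inter> V1) (s \<inter> V2)"
  proof
    fix e assume "e \<in> crossing V1 V2 s"
    then have e: "e \<subseteq> s" "card e = 2" "e \<inter> V1 \<noteq> {}" "e \<inter> V2 \<noteq> {}"
      unfolding crossing_def by auto
    then obtain x y where "e = {x, y}" by (meson card_2_iff)
    then show "e \<in> cross_pairs (s \<inter> V1) (s \<inter> V2)"
      using e assms unfolding cross_pairs_def by (auto simp: image_iff)
  qed
  show "cross_pairs (s \<inter> V1) (s \<inter> V2) \<subseteq> crossing V1 V2 s"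
    using assms unfolding cross_pairs_def crossing_def by (auto simp: card_insert_if disjoint_iff)
qed

lemma crossing_triangle_meets:
  assumes "V1 \<inter> V2 = {}" "card t = 3" "x \<in> crossing V1 V2 t" "y \<in> crossing V1 V2 t"
  shows "x \<inter> y \<noteq> {}"
proof
  assume "x \<inter> y = {}"
  obtain a c b d where "x = {a, c}" "y = {b, d}" "a \<in> V1" "b \<in> V1" "c \<in> V2" "d \<in> V2"
    and abcd: "{a, b, c, d} \<subseteq> t"
    using assms(3,4) unfolding crossing_eq_cross_pairs[OF assms(1)] cross_pairs_def by auto
  moreover have "a \<noteq> c" "b \<noteq> d" using assms(1) \<open>a \<in> V1\<close> \<open>b \<in> V1\<close> \<open>c \<in> V2\<close> \<open>d \<in> V2\<close> by auto
  ultimately have "card {a, b, c, d} = 4" using \<open>x \<inter> y = {}\<close> assms(1) by auto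
  moreover have "finite t" using assms(2) by (intro card_ge_0_finite) simp
  ultimately show False using card_mono[OF _ abcd] assms(2) by simp
qed

lemma slice_vertices_eq_cross_pairs:
  assumes "V1 \<inter> V2 = {}" "weakly_neighborly (slice_vertices T V1 V2) (slice_faces T V1 V2)"
  shows "slice_vertices T V1 V2
           = cross_pairs (boundary_vertices T V1 V2) (boundary_vertices T V2 V1)"
proof
  have crossing_in_slice: "{v, w} \<in> slice_vertices T V1 V2"
    if "s \<in> T" "{v, w} \<subseteq> s" "v \<in> V1" "w \<in> V2" for s v w
    using that assms(1) unfolding slice_vertices_def crossing_eq_cross_pairs[OF assms(1)]
      cross_pairs_def by blast
  show "slice_vertices T V1 V2 \<subseteq> cross_pairs (boundary_vertices T V1 V2) (boundary_vertices T V2 V1)"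
    unfolding slice_vertices_def crossing_eq_cross_pairs[OF assms(1)] cross_pairs_def
      boundary_vertices_def by (fastforce simp: image_iff)
  show "cross_pairs (boundary_vertices T V1 V2) (boundary_vertices T V2 V1) \<subseteq> slice_vertices T V1 V2"
  proof
    fix x assume "x \<in> cross_pairs (boundary_vertices T V1 V2) (boundary_vertices T V2 V1)"
    then obtain v w v' w' s s' where x: "x = {v, w}" "v \<in> V1" "w \<in> V2"
      and vw': "s \<in> T" "{v, w'} \<subseteq> s" "w' \<in> V2" and v'w: "s' \<in> T" "{w, v'} \<subseteq> s'" "v' \<in> V1"
      unfolding cross_pairs_def boundary_vertices_def by auto
    have "{v, w'} \<in> slice_vertices T V1 V2" "{v', w} \<in> slice_vertices T V1 V2"
      using crossing_in_slice vw' v'w x by (auto simp: insert_commute)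
    then obtain s'' where "s'' \<in> T" "{v, w'} \<in> crossing V1 V2 s''" "{v', w} \<in> crossing V1 V2 s''"
      using assms(2) unfolding weakly_neighborly_def slice_faces_def by blast
    then have "s'' \<in> T" "{v, w} \<subseteq> s''" unfolding crossing_def by auto
    then show "x \<in> slice_vertices T V1 V2" using crossing_in_slice x by blast
  qed
qed

lemma card_disjoint_pairs_crossing_tetrahedron:
  assumes "V1 \<inter> V2 = {}" "card s = 4" "s \<subseteq> V1 \<union> V2" "s \<inter> V1 \<noteq> {}" "s \<inter> V2 \<noteq> {}"
  shows "int (card (disjoint_pairs (crossing V1 V2 s)))
           = 4 * int (card (crossing V1 V2 s) choose 2) - 8 * int (card (crossing V1 V2 s)) + 12"
proof -
  define p where "p = card (s \<inter> V1)"
  define q where "q = card (s \<inter> V2)"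
  have fin: "finite s" using assms(2) by (intro card_ge_0_finite) simp
  have disj: "(s \<inter> V1) \<inter> (s \<inter> V2) = {}" using assms(1) by auto
  have "s = (s \<inter> V1) \<union> (s \<inter> V2)" using assms(3) by auto
  then have "p + q = 4"
    using card_Un_disjoint[OF _ _ disj] fin assms(2) by (simp add: p_def q_def)
  moreover have "p \<noteq> 0" "q \<noteq> 0" using fin assms(4,5) by (simp_all add: p_def q_def)
  ultimately have cases: "p = 1 \<and> q = 3 \<or> p = 2 \<and> q = 2 \<or> p = 3 \<and> q = 1" by auto
  have "card (crossing V1 V2 s) = p * q"
    using card_cross_pairs[OF disj] by (simp add: crossing_eq_cross_pairs[OF assms(1)] p_def q_def)
  moreover have "int (card (disjoint_pairs (crossing V1 V2 s)))
      = int p * int q * (int p - 1) * (int q - 1)"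
    using card_disjoint_pairs_cross_pairs[OF disj] fin
    by (simp add: crossing_eq_cross_pairs[OF assms(1)] p_def q_def)
  ultimately show ?thesis using cases by (auto simp: choose_two)
qed

lemma finite_boundary_vertices:
  assumes "comb_3_pseudomanifold T"
  shows "finite (boundary_vertices T Vi Vj)"
proof -
  have "finite (\<Union>T)"
    using assms unfolding comb_3_pseudomanifold_def by (metis card.infinite finite_Union zero_neq_numeral)
  then show ?thesis
    by (rule rev_finite_subset) (auto simp: boundary_vertices_def)
qed

lemma disjoint_slice_vertices_not_edge:
  assumes "V1 \<inter> V2 = {}" "x \<in> slice_vertices T V1 V2" "x \<inter> y = {}"
  shows "x \<noteq> y \<and> {x, y} \<notin> slice_edges T V1 V2"
proof -
  have "x \<noteq> {}" using assms(2) by (auto simp: slice_vertices_def crossing_def)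
  moreover have "{x, y} \<notin> slice_edges T V1 V2"
  proof
    assume "{x, y} \<in> slice_edges T V1 V2"
    then obtain t where "card t = 3" "{x, y} = crossing V1 V2 t"
      by (auto simp: slice_edges_def)
    then show False using crossing_triangle_meets[OF assms(1), of t x y] assms(3) by auto
  qed
  ultimately show ?thesis using assms(3) by auto
qed

lemma slice_faces_sum_card_disjoint_pairs:
  assumes "comb_3_pseudomanifold T" "V1 \<union> V2 = \<Union>T" "V1 \<inter> V2 = {}"
  shows "(\<Sum>F\<in>slice_faces T V1 V2. int (card (disjoint_pairs F)))
           = 4 * (\<Sum>F\<in>slice_faces T V1 V2. int (card F choose 2))
             - 8 * (\<Sum>F\<in>slice_faces T V1 V2. int (card F)) + 12 * int (card (slice_faces T V1 V2))"
proof -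
  have "(\<Sum>F\<in>slice_faces T V1 V2. int (card (disjoint_pairs F)))
      = (\<Sum>F\<in>slice_faces T V1 V2. 4 * int (card F choose 2) - 8 * int (card F) + 12)"
  proof (intro sum.cong refl)
    fix F assume "F \<in> slice_faces T V1 V2"
    then obtain s where "s \<in> T" "F = crossing V1 V2 s" "s \<inter> V1 \<noteq> {}" "s \<inter> V2 \<noteq> {}"
      by (auto simp: slice_faces_def)
    moreover have "card s = 4" "s \<subseteq> V1 \<union> V2"
      using \<open>s \<in> T\<close> assms(1,2) by (auto simp: comb_3_pseudomanifold_def)
    ultimately show "int (card (disjoint_pairs F)) = 4 * int (card F choose 2) - 8 * int (card F) + 12"
      using card_disjoint_pairs_crossing_tetrahedron[OF assms(3)] by simp
  qed
  then show ?thesis by (simp add: sum.distrib sum_subtractf sum_distrib_left)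
qed

theorem lemma5p4:
  fixes T :: "'a set set" and V1 V2 :: "'a set"
  assumes "comb_3_pseudomanifold T"
    and "V1 \<union> V2 = \<Union>T" and "V1 \<inter> V2 = {}" and "V1 \<noteq> {}" and "V2 \<noteq> {}"
    and "polyhedral_map (slice_vertices T V1 V2) (slice_edges T V1 V2) (slice_faces T V1 V2)"
    and "weakly_neighborly (slice_vertices T V1 V2) (slice_faces T V1 V2)"
  shows "int (card (boundary_vertices T V1 V2)) * int (card (boundary_vertices T V2 V1)) *
           (15 - int (card (boundary_vertices T V1 V2)) * int (card (boundary_vertices T V2 V1))
               - int (card (boundary_vertices T V1 V2)) - int (card (boundary_vertices T V2 V1)))
         = 12 * euler_char (slice_vertices T V1 V2) (slice_edges T V1 V2) (slice_faces T V1 V2)"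
proof -
  define SV SE SF where "SV = slice_vertices T V1 V2" "SE = slice_edges T V1 V2"
    "SF = slice_faces T V1 V2"
  define B1 B2 where "B1 = boundary_vertices T V1 V2" "B2 = boundary_vertices T V2 V1"
  note pm = assms(6)[folded SV_SE_SF_def] and wn = assms(7)[folded SV_SE_SF_def]
  have "B1 \<inter> B2 = {}" using assms(3) by (auto simp: B1_B2_def boundary_vertices_def)
  have SV: "SV = cross_pairs B1 B2"
    using slice_vertices_eq_cross_pairs[OF assms(3,7)] by (simp add: SV_SE_SF_def B1_B2_def)
  have "int (card B1) * int (card B2) * (int (card B1) - 1) * (int (card B2) - 1)
      = int (card (disjoint_pairs SV))"
    unfolding SV using \<open>B1 \<inter> B2 = {}\<close> finite_boundary_vertices[OF assms(1)]
    by (simp add: card_disjoint_pairs_cross_pairs B1_B2_def)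
  also have "\<dots> = (\<Sum>F\<in>SF. int (card (disjoint_pairs F)))"
    using weakly_neighborly_sum_card_pairs[OF pm wn, of "\<lambda>x y. x \<inter> y = {}"]
      disjoint_slice_vertices_not_edge[OF assms(3)]
    unfolding disjoint_pairs_def SV_SE_SF_def by (simp flip: of_nat_sum)
  also have "\<dots> = 2 * int (card SV) * (int (card SV) - 1) - 12 * int (card SE) + 12 * int (card SF)"
    using slice_faces_sum_card_disjoint_pairs[OF assms(1-3), folded SV_SE_SF_def]
      weakly_neighborly_sum_choose_two[OF pm wn] polyhedral_map_sum_card_faces[OF pm]
      int_choose_two[of "card SV"] by (simp flip: of_nat_sum)
  finally show ?thesis
    using card_cross_pairs[OF \<open>B1 \<inter> B2 = {}\<close>]
    unfolding SV_SE_SF_def[symmetric] B1_B2_def[symmetric] euler_char_def SV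
    by (simp add: algebra_simps)
qed

end
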